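(* Let $A\in\mathbb{R}^{n\times m}$ have distinct columns with $a_1=0$, and let $S\subset\mathbb{R}^m$ be any set of SAGE-feasible slacks for $A$, i.e. a set such that for every $c\in\mathbb{R}^m$ the signomial $f=\mathrm{Sig}(A,c)$ satisfies $$f_{\mathsf{SAGE}}=\inf\{c^\top\exp(y): y\in\mathcal{R}(A^\top)+S\}.$$ Let $T(A)=\log\,\mathrm{cl}\,\mathrm{conv}\,\exp\mathcal{R}(A^\top)$ (the moment preimage). Then $C_{\mathrm{SAGE}}(A)=C_{\mathrm{NNS}}(A)$ if and only if $S\subset T(A)$.
   Context: For $c\in\mathbb{R}^m$, $\mathrm{Sig}(A,c)$ denotes $x\mapsto\sum_{i=1}^m c_i\exp(a_i^\top x)$. $C_{\mathrm{NNS}}(A)=\{c:\mathrm{Sig}(A,c)(x)\ge 0\ \forall x\in\mathbb{R}^n\}$, $C_{\mathrm{AGE}}(A,k)=\{c\in C_{\mathrm{NNS}}(A): c_i\ge 0\ \forall i\ne k\}$, $C_{\mathrm{SAGE}}(A)=\sum_{k=1}^m C_{\mathrm{AGE}}(A,k)$. For $f=\mathrm{Sig}(A,c)$ with $a_1=0$: $f_{\mathsf{SAGE}}=\sup\{\gamma\in\mathbb{R}: c-\gamma e_1\in C_{\mathrm{SAGE}}(A)\}$. $\mathcal{R}(A^\top)$ is the range of $A^\top$ in $\mathbb{R}^m$; $\exp$ and $\log$ act entrywise (with $\log 0=-\infty$) and elementwise on sets; $\mathrm{cl}\,\mathrm{conv}$ is the closed convex hull; $+$ between sets is the Minkowski sum.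 *)

theory Defs
  imports "HOL-Analysis.Analysis"
begin

text \<open>A real n x m matrix A is a value of type real^'m^'n (rows indexed by 'n,
columns by 'm). The i-th column a_i is column i A.\<close>

definition Sig :: "real^'m^'n \<Rightarrow> real^'m \<Rightarrow> real^'n \<Rightarrow> real" where
  "Sig A c x = (\<Sum>i\<in>UNIV. c $ i * exp (column i A \<bullet> x))"

definition C_NNS :: "real^'m^'n \<Rightarrow> (real^'m) set" where
  "C_NNS A = {c. \<forall>x. Sig A c x \<ge> 0}"

definition C_AGE :: "real^'m^'n \<Rightarrow> 'm \<Rightarrow> (real^'m) set" where
  "C_AGE A k = {c \<in> C_NNS A. \<forall>i. i \<noteq> k \<longrightarrow> c $ i \<ge> 0}"

definition C_SAGE :: "real^'m^'n \<Rightarrow> (real^'m) set" where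
  "C_SAGE A = {c. \<exists>f :: 'm \<Rightarrow> real^'m. (\<forall>k. f k \<in> C_AGE A k) \<and> c = (\<Sum>k\<in>UNIV. f k)}"

text \<open>f_SAGE for f = Sig(A,c), where k0 is the index with a_{k0} = 0 (the paper's index 1).
Value in the extended reals (sup of the empty set is -infinity).\<close>
definition f_SAGE :: "real^'m^'n \<Rightarrow> 'm \<Rightarrow> real^'m \<Rightarrow> ereal" where
  "f_SAGE A k0 c = Sup {ereal \<gamma> | \<gamma>. c - \<gamma> *\<^sub>R axis k0 1 \<in> C_SAGE A}"

definition vexp :: "real^'m \<Rightarrow> real^'m" where
  "vexp y = (\<chi> i. exp (y $ i))"

definition rangeAT :: "real^'m^'n \<Rightarrow> (real^'m) set" where
  "rangeAT A = range (\<lambda>x. transpose A *v x)"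

text \<open>Real points of the moment preimage T(A) = log cl conv exp R(A^T).\<close>
definition T_moment :: "real^'m^'n \<Rightarrow> (real^'m) set" where
  "T_moment A = {y. vexp y \<in> closure (convex hull (vexp ` rangeAT A))}"

end

theory Submission
  imports Defs
begin

text \<open>
  The nonnegative signomials C_NNS(A) form the dual cone of K = cl conv exp R(A^T), and the
  hypothesis on S says that f_SAGE(c) is the infimum of c over exp(R(A^T) + S).
  Since R(A^T) is a subspace, c \<in> C_NNS(A) gives (c_i exp r_i)_i \<in> C_NNS(A) for every
  r \<in> R(A^T), so c is nonnegative on exp(R(A^T) + T(A)). Hence S \<subseteq> T(A) makes f_SAGE(c) \<ge> 0
  for every nonnegative c, and because C_SAGE(A) is closed and absorbs positive multiples of e_1,
  this puts c into C_SAGE(A). Conversely, if s \<in> S lies outside T(A), a hyperplane a\<bullet>z = b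
  separating exp s from K gives the nonnegative signomial a - b e_1 (the first coordinate is 1
  on exp R(A^T)), hence b \<le> f_SAGE(a) \<le> a\<bullet>exp s < b when C_SAGE(A) = C_NNS(A).

  Closedness of C_SAGE(A) comes from a normal form: every AGE decomposition can be rearranged
  so that in each coordinate the summands are bounded by the sum, and then a convergent
  subsequence of decompositions exists.
\<close>

lemma transpose_mult_vec_component: "(transpose A *v x) $ i = column i A \<bullet> x"
  by (simp add: column_def transpose_def matrix_vector_mult_def inner_vec_def mult.commute)

lemma Sig_eq_inner_vexp: "Sig A c x = c \<bullet> vexp (transpose A *v x)"
  unfolding Sig_def vexp_def inner_vec_def transpose_mult_vec_component by simp

lemma inner_vexp_add: "c \<bullet> vexp (r + y) = (\<chi> i. c $ i * exp (r $ i)) \<bullet> vexp y"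
  unfolding inner_vec_def vexp_def by (simp add: exp_add mult.assoc)

lemma inner_axis_vexp: "axis k 1 \<bullet> vexp y = exp (y $ k)"
  unfolding vexp_def inner_axis' by simp

lemma rangeAT_add:
  assumes "r \<in> rangeAT A" and "y \<in> rangeAT A"
  shows "r + y \<in> rangeAT A"
proof -
  obtain x x' where "r = transpose A *v x" "y = transpose A *v x'"
    using assms unfolding rangeAT_def by blast
  then have "r + y = transpose A *v (x + x')" by (simp only: matrix_vector_right_distrib)
  then show ?thesis unfolding rangeAT_def by blast
qed

lemma zero_in_rangeAT: "0 \<in> rangeAT A"
  unfolding rangeAT_def by (metis matrix_vector_mult_0_right rangeI)

lemma rangeAT_component_zero: "column k A = 0 \<Longrightarrow> y \<in> rangeAT A \<Longrightarrow> y $ k = 0"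
  unfolding rangeAT_def by (auto simp only: transpose_mult_vec_component inner_zero_left)

lemma C_NNS_iff: "c \<in> C_NNS A \<longleftrightarrow> (\<forall>y\<in>rangeAT A. 0 \<le> c \<bullet> vexp y)"
  unfolding C_NNS_def rangeAT_def Sig_eq_inner_vexp by auto

definition moment_hull :: "real^'m^'n \<Rightarrow> (real^'m) set" where
  "moment_hull A = closure (convex hull (vexp ` rangeAT A))"

lemma vexp_rangeAT_subset_moment_hull: "vexp ` rangeAT A \<subseteq> moment_hull A"
  unfolding moment_hull_def using hull_subset closure_subset by (rule order_trans)

lemma C_NNS_iff_moment_hull: "c \<in> C_NNS A \<longleftrightarrow> (\<forall>z\<in>moment_hull A. 0 \<le> c \<bullet> z)"
proof
  assume "c \<in> C_NNS A"
  then have "vexp ` rangeAT A \<subseteq> {z. 0 \<le> c \<bullet> z}"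
    unfolding C_NNS_iff by blast
  then have "convex hull (vexp ` rangeAT A) \<subseteq> {z. 0 \<le> c \<bullet> z}"
    by (rule hull_minimal) (rule convex_halfspace_ge)
  then have "moment_hull A \<subseteq> {z. 0 \<le> c \<bullet> z}"
    unfolding moment_hull_def by (rule closure_minimal) (rule closed_halfspace_ge)
  then show "\<forall>z\<in>moment_hull A. 0 \<le> c \<bullet> z" by blast
next
  assume "\<forall>z\<in>moment_hull A. 0 \<le> c \<bullet> z"
  then show "c \<in> C_NNS A"
    unfolding C_NNS_iff using vexp_rangeAT_subset_moment_hull by blast
qed

lemma C_NNS_reweight:
  assumes "c \<in> C_NNS A" and "r \<in> rangeAT A"
  shows "(\<chi> i. c $ i * exp (r $ i)) \<in> C_NNS A"
  unfolding C_NNS_iff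
proof
  fix y assume "y \<in> rangeAT A"
  then have "0 \<le> c \<bullet> vexp (r + y)"
    using assms by (simp add: C_NNS_iff rangeAT_add)
  then show "0 \<le> (\<chi> i. c $ i * exp (r $ i)) \<bullet> vexp y"
    by (simp only: inner_vexp_add)
qed

lemma C_NNS_nonneg_on_T_moment:
  assumes "c \<in> C_NNS A" and "r \<in> rangeAT A" and "s \<in> T_moment A"
  shows "0 \<le> c \<bullet> vexp (r + s)"
proof -
  have "vexp s \<in> moment_hull A"
    using assms(3) unfolding T_moment_def moment_hull_def by simp
  then show ?thesis
    using C_NNS_reweight[OF assms(1,2)] unfolding C_NNS_iff_moment_hull inner_vexp_add by blast
qed

lemma C_NNS_add: "a \<in> C_NNS A \<Longrightarrow> b \<in> C_NNS A \<Longrightarrow> a + b \<in> C_NNS A"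
  unfolding C_NNS_iff by (simp add: inner_add_left)

lemma C_NNS_scaleR: "a \<in> C_NNS A \<Longrightarrow> 0 \<le> t \<Longrightarrow> t *\<^sub>R a \<in> C_NNS A"
  unfolding C_NNS_iff by (simp add: inner_scaleR_left)

lemma C_NNS_sum: "(\<And>k. k \<in> K \<Longrightarrow> f k \<in> C_NNS A) \<Longrightarrow> sum f K \<in> C_NNS A"
  unfolding C_NNS_iff by (auto simp: inner_sum_left intro: sum_nonneg)

lemma axis_in_C_NNS: "column k A = 0 \<Longrightarrow> 0 \<le> t \<Longrightarrow> t *\<^sub>R axis k 1 \<in> C_NNS A"
  unfolding C_NNS_iff by (simp add: inner_axis_vexp rangeAT_component_zero)

lemma closed_C_NNS: "closed (C_NNS A)"
proof -
  have "C_NNS A = (\<Inter>y\<in>rangeAT A. {c. vexp y \<bullet> c \<ge> 0})"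
    by (simp add: C_NNS_iff set_eq_iff inner_commute)
  then show ?thesis
    by (simp add: closed_INT closed_halfspace_ge)
qed

lemma closed_C_AGE: "closed (C_AGE A k)"
proof -
  have "C_AGE A k = C_NNS A \<inter> (\<Inter>i\<in>-{k}. {c. c $ i \<ge> 0})"
    unfolding C_AGE_def by auto
  then show ?thesis
    by (simp add: closed_Int closed_INT closed_C_NNS closed_halfspace_component_ge_cart)
qed

lemma C_SAGE_subset_C_NNS: "C_SAGE A \<subseteq> C_NNS A"
  unfolding C_SAGE_def C_AGE_def by (auto intro!: C_NNS_sum)

lemma C_SAGE_add_axis:
  assumes "column k0 A = 0" and "c \<in> C_SAGE A" and "0 \<le> t"
  shows "c + t *\<^sub>R axis k0 1 \<in> C_SAGE A"
proof -
  obtain f where f: "\<And>k. f k \<in> C_AGE A k" and c: "c = sum f UNIV"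
    using assms(2) unfolding C_SAGE_def by auto
  define g where "g k = f k + (if k = k0 then t *\<^sub>R axis k0 1 else 0)" for k
  have "g k \<in> C_AGE A k" for k
  proof -
    have "(if k = k0 then t *\<^sub>R axis k0 1 else 0) \<in> C_AGE A k"
      using axis_in_C_NNS[OF assms(1,3)] assms(3) axis_in_C_NNS[OF assms(1), of 0]
      by (simp add: C_AGE_def axis_def)
    then show ?thesis
      using f[of k] unfolding g_def C_AGE_def by (auto intro: C_NNS_add)
  qed
  moreover have "sum g UNIV = c + t *\<^sub>R axis k0 1"
    unfolding g_def c by (simp add: sum.distrib)
  ultimately show ?thesis
    unfolding C_SAGE_def by (intro CollectI exI[of _ g]) simp
qed

text \<open>In an AGE decomposition only the diagonal entry f j $ j of coordinate j can be negative;
  "concentrated" says that either it is not, or f j carries the whole coordinate j.\<close>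

definition concentrated :: "('m \<Rightarrow> real^'m) \<Rightarrow> 'm \<Rightarrow> bool" where
  "concentrated f j \<longleftrightarrow> (\<forall>k. 0 \<le> f k $ j) \<or> (\<forall>k. k \<noteq> j \<longrightarrow> f k $ j = 0)"

lemma concentrated_component_bound:
  "concentrated f j \<Longrightarrow> \<bar>f k $ j\<bar> \<le> \<bar>sum f UNIV $ j\<bar>"
  unfolding concentrated_def
proof (elim disjE)
  assume nonneg: "\<forall>l. 0 \<le> f l $ j"
  then have "f k $ j \<le> (\<Sum>l\<in>UNIV. f l $ j)"
    by (intro member_le_sum) auto
  then show ?thesis
    using nonneg by (simp add: sum_component)
next
  assume off: "\<forall>l. l \<noteq> j \<longrightarrow> f l $ j = 0"
  then have "sum f UNIV $ j = f j $ j"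
    by (simp add: sum_component sum.remove[of UNIV j])
  then show ?thesis
    using off by (cases "k = j") auto
qed

text \<open>Spreads f i over all summands; the weights f k $ i / D (k \<noteq> i) and 1 - P / D, with P the
  sum of the off-diagonal entries in coordinate i, add up to 1.\<close>

definition redistribute :: "('m \<Rightarrow> real^'m) \<Rightarrow> 'm \<Rightarrow> real \<Rightarrow> 'm \<Rightarrow> real^'m" where
  "redistribute f i D k =
     (if k = i then (1 - (\<Sum>l\<in>-{i}. f l $ i) / D) *\<^sub>R f i else f k + (f k $ i / D) *\<^sub>R f i)"

lemma redistribute_sum:
  "sum (redistribute f i D) UNIV = sum f UNIV"
proof -
  let ?P = "\<Sum>l\<in>-{i}. f l $ i"
  have "sum (redistribute f i D) (-{i}) = sum f (-{i}) + (?P / D) *\<^sub>R f i"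
    by (simp add: redistribute_def sum.distrib scaleR_sum_left sum_divide_distrib)
  then show ?thesis
    by (simp add: sum.remove[of UNIV i] Compl_eq_Diff_UNIV redistribute_def algebra_simps)
qed

lemma redistribute_component_eq:
  "f i $ j = 0 \<Longrightarrow> redistribute f i D k $ j = f k $ j"
  by (simp add: redistribute_def)

lemma redistribute_C_AGE:
  assumes f: "\<And>k. f k \<in> C_AGE A k"
    and D: "(\<Sum>l\<in>-{i}. f l $ i) \<le> D" "- f i $ i \<le> D" "0 < D"
  shows "redistribute f i D k \<in> C_AGE A k"
proof -
  have off: "0 \<le> f l $ j" if "l \<noteq> j" for l j
    using f[of l] that unfolding C_AGE_def by auto
  have nns: "f l \<in> C_NNS A" for l
    using f[of l] unfolding C_AGE_def by auto
  have weight_i: "0 \<le> 1 - (\<Sum>l\<in>-{i}. f l $ i) / D"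
    using D by simp
  have weight: "0 \<le> f k $ i / D" if "k \<noteq> i"
    using off[OF that] D by simp
  have "redistribute f i D k \<in> C_NNS A"
    using weight weight_i
    by (auto simp: redistribute_def intro!: C_NNS_add C_NNS_scaleR nns)
  moreover have "0 \<le> redistribute f i D k $ j" if "j \<noteq> k" for j
  proof (cases "k = i")
    case True
    then show ?thesis
      using that weight_i off[of i j] by (simp add: redistribute_def)
  next
    case False
    show ?thesis
    proof (cases "j = i")
      case True
      have "f k $ i + f k $ i / D * f i $ i = f k $ i * ((D + f i $ i) / D)"
        using D by (simp add: field_simps)
      then show ?thesis
        using True False D off[of k i] by (simp add: redistribute_def)
    next
      case False
      have "0 \<le> f k $ i / D * f i $ j"
        using off[of i j] False weight[OF \<open>k \<noteq> i\<close>] by (intro mult_nonneg_nonneg) auto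
      then show ?thesis
        using \<open>k \<noteq> i\<close> that off[of k j] by (simp add: redistribute_def)
    qed
  qed
  ultimately show ?thesis
    unfolding C_AGE_def by auto
qed

lemma concentrated_redistribute_at:
  assumes f: "\<And>k. f k \<in> C_AGE A k" and neg: "f i $ i < 0"
  defines "D \<equiv> max (\<Sum>l\<in>-{i}. f l $ i) (- f i $ i)"
  shows "concentrated (redistribute f i D) i"
proof -
  let ?P = "\<Sum>l\<in>-{i}. f l $ i"
  have D: "0 < D" using neg by (simp add: D_def)
  have scaled: "redistribute f i D k $ i = f k $ i * ((D + f i $ i) / D)" if "k \<noteq> i" for k
    using that D by (simp add: redistribute_def field_simps)
  show ?thesis
  proof (cases "- f i $ i \<le> ?P")
    case True
    then have "D = ?P" by (simp add: D_def)
    then have "redistribute f i D i $ i = 0"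
      using D by (simp add: redistribute_def)
    moreover have "0 \<le> redistribute f i D k $ i" if "k \<noteq> i" for k
      using f[of k] that D True \<open>D = ?P\<close> unfolding scaled[OF that] C_AGE_def
      by (auto intro!: mult_nonneg_nonneg divide_nonneg_pos)
    ultimately show ?thesis
      unfolding concentrated_def by (metis order_refl)
  next
    case False
    then have "D = - f i $ i" by (simp add: D_def)
    then show ?thesis
      unfolding concentrated_def using scaled by simp
  qed
qed

lemma concentrated_redistribute_other:
  assumes f: "\<And>k. f k \<in> C_AGE A k" and D: "(\<Sum>l\<in>-{i}. f l $ i) \<le> D" "0 < D"
    and "j \<noteq> i" and conc: "concentrated f j"
  shows "concentrated (redistribute f i D) j"
  using conc unfolding concentrated_def
proof (elim disjE)
  assume nonneg: "\<forall>k. 0 \<le> f k $ j"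
  have "0 \<le> redistribute f i D k $ j" for k
  proof (cases "k = i")
    case True
    then show ?thesis using D nonneg by (simp add: redistribute_def)
  next
    case False
    then have "0 \<le> f k $ i" using f[of k] unfolding C_AGE_def by auto
    then show ?thesis using False D nonneg by (simp add: redistribute_def)
  qed
  then show "(\<forall>k. 0 \<le> redistribute f i D k $ j) \<or> (\<forall>k. k \<noteq> j \<longrightarrow> redistribute f i D k $ j = 0)"
    by blast
next
  assume off: "\<forall>k. k \<noteq> j \<longrightarrow> f k $ j = 0"
  then have "f i $ j = 0" using \<open>j \<noteq> i\<close> by auto
  then show "(\<forall>k. 0 \<le> redistribute f i D k $ j) \<or> (\<forall>k. k \<noteq> j \<longrightarrow> redistribute f i D k $ j = 0)"
    using off by (simp add: redistribute_component_eq)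
qed

lemma concentrated_decomposition_step:
  assumes f: "\<And>k. f k \<in> C_AGE A k" and conc: "\<forall>j\<in>J. concentrated f j" and "i \<notin> J"
  shows "\<exists>g. (\<forall>k. g k \<in> C_AGE A k) \<and> sum g UNIV = sum f UNIV \<and> (\<forall>j\<in>insert i J. concentrated g j)"
proof (cases "0 \<le> f i $ i")
  case True
  then have "concentrated f i"
    using f unfolding concentrated_def C_AGE_def by (metis (mono_tags, lifting) mem_Collect_eq)
  then show ?thesis using f conc by blast
next
  case False
  define D where "D = max (\<Sum>l\<in>-{i}. f l $ i) (- f i $ i)"
  have D: "(\<Sum>l\<in>-{i}. f l $ i) \<le> D" "- f i $ i \<le> D" "0 < D"
    using False by (auto simp: D_def)
  have "\<forall>k. redistribute f i D k \<in> C_AGE A k"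
    using redistribute_C_AGE[OF f D] by blast
  moreover have "concentrated (redistribute f i D) i"
    using concentrated_redistribute_at[OF f] False unfolding D_def by simp
  moreover have "\<forall>j\<in>J. concentrated (redistribute f i D) j"
    using concentrated_redistribute_other[OF f D(1,3)] conc \<open>i \<notin> J\<close> by fastforce
  ultimately show ?thesis
    using redistribute_sum by blast
qed

lemma exists_concentrated_decomposition:
  assumes "c \<in> C_SAGE A"
  shows "\<exists>f. (\<forall>k. f k \<in> C_AGE A k) \<and> c = sum f UNIV \<and> (\<forall>j. concentrated f j)"
proof -
  have "\<exists>f. (\<forall>k. f k \<in> C_AGE A k) \<and> c = sum f UNIV \<and> (\<forall>j\<in>J. concentrated f j)"
    if "finite J" for J
    using that
  proof (induction rule: finite_induct)
    case empty
    then show ?case using assms unfolding C_SAGE_def by simp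
  next
    case (insert i J)
    then obtain f where "\<And>k. f k \<in> C_AGE A k" "c = sum f UNIV" "\<forall>j\<in>J. concentrated f j"
      by blast
    then show ?case
      using concentrated_decomposition_step[of f A J i] insert(2) by metis
  qed
  from this[of UNIV] show ?thesis by simp
qed

lemma limit_of_bounded_AGE_sums_in_C_SAGE:
  fixes F :: "nat \<Rightarrow> 'm \<Rightarrow> real^'m"
  assumes F: "\<And>n k. F n k \<in> C_AGE A k" and bound: "\<And>n k j. \<bar>F n k $ j\<bar> \<le> M"
    and lim: "(\<lambda>n. sum (F n) UNIV) \<longlonglongrightarrow> l"
  shows "l \<in> C_SAGE A"
proof -
  define G where "G n = (\<chi> k. F n k)" for n
  have G_bound: "norm (G n) \<le> of_nat CARD('m) * (of_nat CARD('m) * M)" for n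
  proof -
    have "norm (G n) \<le> (\<Sum>k\<in>UNIV. norm (G n $ k))"
      unfolding norm_vec_def by (rule L2_set_le_sum) auto
    also have "\<dots> \<le> (\<Sum>k\<in>(UNIV::'m set). \<Sum>j\<in>(UNIV::'m set). M)"
    proof (rule sum_mono)
      fix k
      have "norm (G n $ k) \<le> (\<Sum>j\<in>UNIV. \<bar>F n k $ j\<bar>)"
        unfolding G_def using norm_le_l1_cart by simp
      also have "\<dots> \<le> (\<Sum>j\<in>(UNIV::'m set). M)"
        by (rule sum_mono) (rule bound)
      finally show "norm (G n $ k) \<le> (\<Sum>j\<in>(UNIV::'m set). M)" .
    qed
    finally show ?thesis by simp
  qed
  then have "bounded (range G)"
    unfolding bounded_iff by blast
  then obtain L r where r: "strict_mono r" and GL: "(G \<circ> r) \<longlonglongrightarrow> L"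
    using bounded_imp_convergent_subsequence by blast
  have Lk: "(\<lambda>n. F (r n) k) \<longlonglongrightarrow> L $ k" for k
    using tendsto_vec_nth[OF GL, of k] by (simp add: G_def o_def)
  have "L $ k \<in> C_AGE A k" for k
    using closed_sequentially[OF closed_C_AGE _ Lk] F by blast
  moreover have "l = (\<Sum>k\<in>UNIV. L $ k)"
  proof (rule LIMSEQ_unique)
    show "(\<lambda>n. sum (F (r n)) UNIV) \<longlonglongrightarrow> l"
      using LIMSEQ_subseq_LIMSEQ[OF lim r] by (simp add: o_def)
    show "(\<lambda>n. sum (F (r n)) UNIV) \<longlonglongrightarrow> (\<Sum>k\<in>UNIV. L $ k)"
      by (intro tendsto_sum Lk)
  qed
  ultimately show ?thesis
    unfolding C_SAGE_def by (intro CollectI exI[of _ "\<lambda>k. L $ k"]) simp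
qed

lemma closed_C_SAGE: "closed (C_SAGE (A :: real^'m^'n))"
  unfolding closed_sequential_limits
proof (intro allI impI, elim conjE)
  fix c :: "nat \<Rightarrow> real^'m" and l
  assume c: "\<forall>n. c n \<in> C_SAGE A" and lim: "c \<longlonglongrightarrow> l"
  have "\<forall>n. \<exists>f. (\<forall>k. f k \<in> C_AGE A k) \<and> c n = sum f UNIV \<and> (\<forall>j. concentrated f j)"
    using exists_concentrated_decomposition c by blast
  then obtain F where F: "\<And>n k. F n k \<in> C_AGE A k" "\<And>n. c n = sum (F n) UNIV"
    "\<And>n j. concentrated (F n) j"
    by metis
  obtain M where M: "\<And>n. norm (c n) \<le> M"
    using convergent_imp_bounded[OF lim] unfolding bounded_iff by auto
  have "\<bar>F n k $ j\<bar> \<le> M" for n k j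
    using concentrated_component_bound[OF F(3)] component_le_norm_cart[of "c n" j] M[of n]
    unfolding F(2) by (meson order_trans)
  with F(1) show "l \<in> C_SAGE A"
    using lim unfolding F(2) by (rule limit_of_bounded_AGE_sums_in_C_SAGE)
qed

lemma ereal_le_f_SAGE_iff:
  assumes a0: "column k0 A = 0"
  shows "ereal \<gamma> \<le> f_SAGE A k0 c \<longleftrightarrow> c - \<gamma> *\<^sub>R axis k0 1 \<in> C_SAGE A"
proof
  assume "c - \<gamma> *\<^sub>R axis k0 1 \<in> C_SAGE A"
  then show "ereal \<gamma> \<le> f_SAGE A k0 c"
    unfolding f_SAGE_def by (intro Sup_upper) blast
next
  assume \<gamma>: "ereal \<gamma> \<le> f_SAGE A k0 c"
  define \<epsilon> :: "nat \<Rightarrow> real" where "\<epsilon> n = inverse (real (Suc n))" for n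
  have approx: "c - (\<gamma> - \<epsilon> n) *\<^sub>R axis k0 1 \<in> C_SAGE A" for n
  proof -
    have "ereal (\<gamma> - \<epsilon> n) < f_SAGE A k0 c"
      using \<gamma> by (rule less_le_trans[rotated]) (simp add: \<epsilon>_def)
    then obtain \<gamma>' where \<gamma>': "c - \<gamma>' *\<^sub>R axis k0 1 \<in> C_SAGE A" "\<gamma> - \<epsilon> n < \<gamma>'"
      unfolding f_SAGE_def less_Sup_iff by auto
    then have "(c - \<gamma>' *\<^sub>R axis k0 1) + (\<gamma>' - (\<gamma> - \<epsilon> n)) *\<^sub>R axis k0 1 \<in> C_SAGE A"
      by (intro C_SAGE_add_axis[OF a0]) auto
    then show ?thesis by (simp add: algebra_simps)
  qed
  have "(\<lambda>n. c - (\<gamma> - \<epsilon> n) *\<^sub>R axis k0 1) \<longlonglongrightarrow> c - (\<gamma> - 0) *\<^sub>R axis k0 1"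
    unfolding \<epsilon>_def by (intro tendsto_intros LIMSEQ_inverse_real_of_nat)
  then show "c - \<gamma> *\<^sub>R axis k0 1 \<in> C_SAGE A"
    using closed_sequentially[OF closed_C_SAGE approx] by simp
qed

lemma in_T_moment_if_C_SAGE_eq_C_NNS:
  assumes eq: "C_SAGE A = C_NNS A" and a0: "column k0 A = 0"
    and bound: "\<And>a. f_SAGE A k0 a \<le> ereal (a \<bullet> vexp s)"
  shows "s \<in> T_moment A"
proof (rule ccontr)
  assume "s \<notin> T_moment A"
  then have "vexp s \<notin> moment_hull A"
    unfolding T_moment_def moment_hull_def by simp
  then obtain a b where ab: "a \<bullet> vexp s < b" "\<forall>z\<in>moment_hull A. b < a \<bullet> z"
    using separating_hyperplane_closed_point[of "moment_hull A"]
    unfolding moment_hull_def by (meson closed_closure convex_closure convex_convex_hull)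
  \<comment> \<open>every point of exp R(A^T) has k0-th coordinate exp 0 = 1\<close>
  have "a - b *\<^sub>R axis k0 1 \<in> C_NNS A"
    unfolding C_NNS_iff
  proof
    fix y assume "y \<in> rangeAT A"
    then have "b < a \<bullet> vexp y" and "y $ k0 = 0"
      using ab(2) vexp_rangeAT_subset_moment_hull rangeAT_component_zero[OF a0] by auto
    then show "0 \<le> (a - b *\<^sub>R axis k0 1) \<bullet> vexp y"
      by (simp add: inner_diff_left inner_axis_vexp)
  qed
  then have "ereal b \<le> f_SAGE A k0 a"
    using eq ereal_le_f_SAGE_iff[OF a0] by simp
  then have "ereal b \<le> ereal (a \<bullet> vexp s)"
    using bound order_trans by blast
  then show False
    using ab(1) by simp
qed

lemma Inf_slack_le:
  assumes "s \<in> S"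
  shows "Inf {ereal (c \<bullet> vexp y) | y. y \<in> {r + s | r s. r \<in> rangeAT A \<and> s \<in> S}} \<le> ereal (c \<bullet> vexp s)"
proof (rule Inf_lower)
  have "0 + s \<in> {r + s | r s. r \<in> rangeAT A \<and> s \<in> S}"
    using zero_in_rangeAT assms by blast
  then show "ereal (c \<bullet> vexp s) \<in> {ereal (c \<bullet> vexp y) | y. y \<in> {r + s | r s. r \<in> rangeAT A \<and> s \<in> S}}"
    by (metis (mono_tags, lifting) add_0 mem_Collect_eq)
qed

lemma Inf_slack_nonneg:
  assumes c: "c \<in> C_NNS A" and "S \<subseteq> T_moment A"
  shows "ereal 0 \<le> Inf {ereal (c \<bullet> vexp y) | y. y \<in> {r + s | r s. r \<in> rangeAT A \<and> s \<in> S}}"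
proof (rule Inf_greatest)
  fix z assume "z \<in> {ereal (c \<bullet> vexp y) | y. y \<in> {r + s | r s. r \<in> rangeAT A \<and> s \<in> S}}"
  then obtain r s where "r \<in> rangeAT A" "s \<in> S" "z = ereal (c \<bullet> vexp (r + s))"
    by blast
  then show "ereal 0 \<le> z"
    using C_NNS_nonneg_on_T_moment[OF c] assms(2) by auto
qed

theorem mainTheorem20:
  fixes A :: "real^'m^'n" and k0 :: 'm and S :: "(real^'m) set"
  assumes distinct_cols: "inj (\<lambda>i. column i A)"
    and a1_zero: "column k0 A = 0"
    and slacks: "\<forall>c :: real^'m. f_SAGE A k0 c =
        Inf {ereal (c \<bullet> vexp y) | y. y \<in> {r + s | r s. r \<in> rangeAT A \<and> s \<in> S}}"
  shows "C_SAGE A = C_NNS A \<longleftrightarrow> S \<subseteq> T_moment A"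
proof
  assume eq: "C_SAGE A = C_NNS A"
  have "f_SAGE A k0 a \<le> ereal (a \<bullet> vexp s)" if "s \<in> S" for a s
    using slacks Inf_slack_le[OF that] by simp
  then show "S \<subseteq> T_moment A"
    using in_T_moment_if_C_SAGE_eq_C_NNS[OF eq a1_zero] by blast
next
  assume sub: "S \<subseteq> T_moment A"
  have "ereal 0 \<le> f_SAGE A k0 c" if "c \<in> C_NNS A" for c
    using slacks Inf_slack_nonneg[OF that sub] by simp
  then have "C_NNS A \<subseteq> C_SAGE A"
    using ereal_le_f_SAGE_iff[OF a1_zero, of 0] by auto
  then show "C_SAGE A = C_NNS A"
    using C_SAGE_subset_C_NNS by (rule subset_antisym[rotated])
qed

end
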